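(* Let $\mathbb X,\mathbb Y$ be Euclidean spaces, $g\colon\mathbb X\to\mathbb Y$ continuous, $D\subset\mathbb Y$ closed, $\Phi(x):=g(x)-D$, $(\bar x,0)\in\operatorname{gph}\Phi$, $u\in\mathbb S_{\mathbb X}$, and assume $g$ is calm in direction $u$ at $\bar x$. Let $\mathcal E=\{e_1,\dots,e_m\}$ be an orthonormal basis of $\mathbb Y$. Consider condition (N): there do not exist $v\in\mathbb Y$ and a nonzero $\lambda\in\mathcal N_D(g(\bar x);v)$ with $0\in D^*g(\bar x;(u,v))(\lambda)$ for which there are sequences $x_k\in\mathbb X$ with $x_k\ne\bar x$, $z_k\in D$, $\lambda_k\in\mathbb Y$, $\eta_k\in\mathbb X$ satisfying $x_k\to\bar x$, $z_k\to g(\bar x)$, $\lambda_k\to\lambda$, $\eta_k\to0$, $\frac{x_k-\bar x}{\|x_k-\bar x\|}\to u$, $\frac{z_k-g(\bar x)}{\|x_k-\bar x\|}\to v$, $\frac{g(x_k)-g(\bar x)}{\|x_k-\bar x\|}\to v$, and for all $k$ and $i$: $\eta_k\in\widehat D^*g(x_k)(\lambda_k)$, $\lambda_k\in\widehat{\mathcal N}_D(z_k)$, and $\langle\lambda,e_i\rangle\langle g(x_k)-z_k,e_i\rangle>0$ whenever $\langle\lambda,e_i\rangle\ne0$. If (N) holds, then $\Phi$ is quasi-normal in direction $u$ at $(\bar x,0)$ w.r.t. $\mathcal E$. Moreover, if $g$ is calm at every point near $\bar x$, then (N) is equivalent to quasi-normality of $\Phi$ in direction $u$ at $(\bar x,0)$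 w.r.t. $\mathcal E$.
   Context: $g$ is calm at $x$ in direction $u$ if there are $\varepsilon,\delta,L>0$ with $\|g(x')-g(x)\|\le L\|x'-x\|$ for all $x'\in x+\mathbb B_{\varepsilon,\delta}(u)$, where $\mathbb B_{\varepsilon,\delta}(u)=\{w\mid\|\|w\|u-\|u\|w\|\le\delta\|u\|\|w\|,\ \|w\|\le\varepsilon\}$; calm at $x$ means this with $u=0$. $\widehat{\mathcal N}$ is the regular normal cone, $\mathcal N_Q(z;w)$ the directional limiting normal cone (all $\eta$ with $w_k\to w$, $t_k\downarrow0$, $\eta_k\to\eta$, $\eta_k\in\widehat{\mathcal N}_Q(z+t_kw_k)$). For single-valued $g$: $\widehat D^*g(x)(\lambda)=\{x^*\mid(x^*,-\lambda)\in\widehat{\mathcal N}_{\operatorname{gph}g}(x,g(x))\}$ and $D^*g(\bar x;(u,v))(\lambda)=\{x^*\mid(x^*,-\lambda)\in\mathcal N_{\operatorname{gph}g}((\bar x,g(\bar x));(u,v))\}$; for set-valued $\Phi$, $\widehat D^*\Phi$ and $D^*\Phi((\bar x,\bar y);(u,v))$ are defined analogously with $\operatorname{gph}\Phi$. Quasi-normality in direction $u$ at $(\bar x,0)$ w.r.t. $\mathcal E$: there is no nonzero $\lambda$ with $0\in D^*\Phi((\bar x,0);(u,0))(\lambda)$ for which there exist $(x_k,y_k)\in\operatorname{gph}\Phi$ with $x_k\ne\bar x$, $\lambda_k$, $\eta_k$ with $x_k\to\bar x$, $y_k\to0$, $\lambda_k\to\lambda$, $\eta_k\to0$, $\frac{x_k-\bar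 x}{\|x_k-\bar x\|}\to u$, $\frac{y_k}{\|x_k-\bar x\|}\to0$, and for all $k,i$: $\eta_k\in\widehat D^*\Phi(x_k,y_k)(\lambda_k)$ and $\langle\lambda,e_i\rangle\langle y_k,e_i\rangle>0$ whenever $\langle\lambda,e_i\rangle\ne0$. *)

theory Defs
  imports "HOL-Analysis.Analysis"
begin

definition regular_normal :: "'a::euclidean_space set \<Rightarrow> 'a \<Rightarrow> 'a set" where
  "regular_normal Q z = {\<eta>. z \<in> Q \<and>
     (\<forall>\<epsilon>>0. \<exists>\<delta>>0. \<forall>z'\<in>Q. norm (z' - z) < \<delta> \<longrightarrow> \<eta> \<bullet> (z' - z) \<le> \<epsilon> * norm (z' - z))}"

definition dir_normal :: "'a::euclidean_space set \<Rightarrow> 'a \<Rightarrow> 'a \<Rightarrow> 'a set" where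
  "dir_normal Q z w = {\<eta>. \<exists>(t::nat \<Rightarrow> real) wk \<eta>k.
     (\<forall>k. t k > 0) \<and> t \<longlonglongrightarrow> 0 \<and> wk \<longlonglongrightarrow> w \<and> \<eta>k \<longlonglongrightarrow> \<eta> \<and>
     (\<forall>k. \<eta>k k \<in> regular_normal Q (z + t k *\<^sub>R wk k))}"

definition graph_fun :: "('a \<Rightarrow> 'b) \<Rightarrow> ('a \<times> 'b) set" where
  "graph_fun g = {(x, g x) | x. True}"

definition graph_mult :: "('a \<Rightarrow> 'b set) \<Rightarrow> ('a \<times> 'b) set" where
  "graph_mult \<Phi> = {(x, y). y \<in> \<Phi> x}"

definition reg_coderiv_fun :: "('a::euclidean_space \<Rightarrow> 'b::euclidean_space) \<Rightarrow> 'a \<Rightarrow> 'b \<Rightarrow> 'a set" where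
  "reg_coderiv_fun g x lam = {xs. (xs, - lam) \<in> regular_normal (graph_fun g) (x, g x)}"

definition dir_coderiv_fun :: "('a::euclidean_space \<Rightarrow> 'b::euclidean_space) \<Rightarrow> 'a \<Rightarrow> 'a \<times> 'b \<Rightarrow> 'b \<Rightarrow> 'a set" where
  "dir_coderiv_fun g x uv lam = {xs. (xs, - lam) \<in> dir_normal (graph_fun g) (x, g x) uv}"

definition reg_coderiv_mult :: "('a::euclidean_space \<Rightarrow> 'b::euclidean_space set) \<Rightarrow> 'a \<Rightarrow> 'b \<Rightarrow> 'b \<Rightarrow> 'a set" where
  "reg_coderiv_mult \<Phi> x y lam = {xs. (xs, - lam) \<in> regular_normal (graph_mult \<Phi>) (x, y)}"

definition dir_coderiv_mult :: "('a::euclidean_space \<Rightarrow> 'b::euclidean_space set) \<Rightarrow> 'a \<times> 'b \<Rightarrow> 'a \<times> 'b \<Rightarrow> 'b \<Rightarrow> 'a set" where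
  "dir_coderiv_mult \<Phi> xy uv lam = {xs. (xs, - lam) \<in> dir_normal (graph_mult \<Phi>) xy uv}"

definition dir_nbhd :: "real \<Rightarrow> real \<Rightarrow> 'a::real_normed_vector \<Rightarrow> 'a set" where
  "dir_nbhd \<epsilon> \<delta> u = {w. norm (norm w *\<^sub>R u - norm u *\<^sub>R w) \<le> \<delta> * norm u * norm w \<and> norm w \<le> \<epsilon>}"

definition calm_dir :: "('a::real_normed_vector \<Rightarrow> 'b::real_normed_vector) \<Rightarrow> 'a \<Rightarrow> 'a \<Rightarrow> bool" where
  "calm_dir g x u \<longleftrightarrow> (\<exists>\<epsilon>>0. \<exists>\<delta>>0. \<exists>L>0. \<forall>w\<in>dir_nbhd \<epsilon> \<delta> u.
      norm (g (x + w) - g x) \<le> L * norm w)"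

definition calm :: "('a::real_normed_vector \<Rightarrow> 'b::real_normed_vector) \<Rightarrow> 'a \<Rightarrow> bool" where
  "calm g x \<longleftrightarrow> calm_dir g x 0"

definition orthonormal_basis :: "'a::euclidean_space set \<Rightarrow> bool" where
  "orthonormal_basis E \<longleftrightarrow> pairwise orthogonal E \<and> (\<forall>e\<in>E. norm e = 1) \<and> span E = UNIV"

definition quasi_normal_dir :: "('a::euclidean_space \<Rightarrow> 'b::euclidean_space set) \<Rightarrow> 'a \<Rightarrow> 'a \<Rightarrow> 'b set \<Rightarrow> bool" where
  "quasi_normal_dir \<Phi> xb u E \<longleftrightarrow> \<not> (\<exists>lam. lam \<noteq> 0 \<and> 0 \<in> dir_coderiv_mult \<Phi> (xb, 0) (u, 0) lam \<and>
     (\<exists>(xk::nat \<Rightarrow> 'a) (yk::nat \<Rightarrow> 'b) lamk \<eta>k.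
        (\<forall>k. (xk k, yk k) \<in> graph_mult \<Phi> \<and> xk k \<noteq> xb) \<and>
        xk \<longlonglongrightarrow> xb \<and> yk \<longlonglongrightarrow> 0 \<and> lamk \<longlonglongrightarrow> lam \<and> \<eta>k \<longlonglongrightarrow> 0 \<and>
        (\<lambda>k. (xk k - xb) /\<^sub>R norm (xk k - xb)) \<longlonglongrightarrow> u \<and>
        (\<lambda>k. yk k /\<^sub>R norm (xk k - xb)) \<longlonglongrightarrow> 0 \<and>
        (\<forall>k. \<eta>k k \<in> reg_coderiv_mult \<Phi> (xk k) (yk k) (lamk k) \<and>
           (\<forall>e\<in>E. lam \<bullet> e \<noteq> 0 \<longrightarrow> (lam \<bullet> e) * (yk k \<bullet> e) > 0))))"

definition condition_N :: "('a::euclidean_space \<Rightarrow> 'b::euclidean_space) \<Rightarrow> 'b set \<Rightarrow> 'a \<Rightarrow> 'a \<Rightarrow> 'b set \<Rightarrow> bool" where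
  "condition_N g D xb u E \<longleftrightarrow> \<not> (\<exists>v lam. lam \<noteq> 0 \<and> lam \<in> dir_normal D (g xb) v \<and>
     0 \<in> dir_coderiv_fun g xb (u, v) lam \<and>
     (\<exists>(xk::nat \<Rightarrow> 'a) (zk::nat \<Rightarrow> 'b) lamk \<eta>k.
        (\<forall>k. xk k \<noteq> xb \<and> zk k \<in> D) \<and>
        xk \<longlonglongrightarrow> xb \<and> zk \<longlonglongrightarrow> g xb \<and> lamk \<longlonglongrightarrow> lam \<and> \<eta>k \<longlonglongrightarrow> 0 \<and>
        (\<lambda>k. (xk k - xb) /\<^sub>R norm (xk k - xb)) \<longlonglongrightarrow> u \<and>
        (\<lambda>k. (zk k - g xb) /\<^sub>R norm (xk k - xb)) \<longlonglongrightarrow> v \<and>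
        (\<lambda>k. (g (xk k) - g xb) /\<^sub>R norm (xk k - xb)) \<longlonglongrightarrow> v \<and>
        (\<forall>k. \<eta>k k \<in> reg_coderiv_fun g (xk k) (lamk k) \<and> lamk k \<in> regular_normal D (zk k) \<and>
           (\<forall>e\<in>E. lam \<bullet> e \<noteq> 0 \<longrightarrow> (lam \<bullet> e) * ((g (xk k) - zk k) \<bullet> e) > 0))))"

end

theory Submission
  imports Defs
begin

text \<open>
  With \<open>z\<^sub>k = g x\<^sub>k - y\<^sub>k\<close> the sequences violating quasi-normality of
  \<open>\<Phi> = g - D\<close> and those violating condition (N) correspond to each other. A regular
  normal \<open>(\<eta>, -\<lambda>)\<close> to \<open>gph \<Phi>\<close> at \<open>(x, g x - z)\<close> is a regular normal to \<open>gph g\<close>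
  at \<open>(x, g x)\<close> with \<open>\<lambda>\<close> a regular normal to \<open>D\<close> at \<open>z\<close>, since both sets embed
  isometrically into \<open>gph \<Phi>\<close>; the converse holds where \<open>g\<close> is calm, because then both
  components of an increment in \<open>gph \<Phi>\<close> are controlled by the increment itself.
  The direction \<open>v\<close> required by (N) is a limit point of the difference quotients
  \<open>(g x\<^sub>k - g x\<^sub>b) / \<parallel>x\<^sub>k - x\<^sub>b\<parallel>\<close>, which directional calmness keeps bounded.
\<close>

lemma regular_normalD:
  assumes "\<eta> \<in> regular_normal Q z" and "\<epsilon> > 0"
  obtains \<delta> where "\<delta> > 0"
    and "\<And>z'. z' \<in> Q \<Longrightarrow> norm (z' - z) < \<delta> \<Longrightarrow> \<eta> \<bullet> (z' - z) \<le> \<epsilon> * norm (z' - z)"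
  using assms unfolding regular_normal_def by blast

lemma regular_normal_pullback:
  fixes f :: "'a::euclidean_space \<Rightarrow> 'b::euclidean_space"
  assumes \<eta>: "\<eta> \<in> regular_normal S (f z)" and z: "z \<in> Q" and fQ: "f ` Q \<subseteq> S"
    and C: "C > 0" and lipschitz: "\<And>w. w \<in> Q \<Longrightarrow> norm (f w - f z) \<le> C * norm (w - z)"
    and inner: "\<And>w. w \<in> Q \<Longrightarrow> \<eta> \<bullet> (f w - f z) = \<xi> \<bullet> (w - z)"
  shows "\<xi> \<in> regular_normal Q z"
proof -
  have "\<exists>\<delta>>0. \<forall>w\<in>Q. norm (w - z) < \<delta> \<longrightarrow> \<xi> \<bullet> (w - z) \<le> \<epsilon> * norm (w - z)"
    if "\<epsilon> > 0" for \<epsilon>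
  proof -
    obtain \<delta> where "\<delta> > 0"
      and \<delta>: "\<And>s. s \<in> S \<Longrightarrow> norm (s - f z) < \<delta> \<Longrightarrow> \<eta> \<bullet> (s - f z) \<le> \<epsilon> / C * norm (s - f z)"
      using regular_normalD[OF \<eta>, of "\<epsilon> / C"] \<open>\<epsilon> > 0\<close> C by auto
    show ?thesis
    proof (intro exI[of _ "\<delta> / C"] conjI ballI impI)
      fix w assume w: "w \<in> Q" "norm (w - z) < \<delta> / C"
      have "norm (f w - f z) < \<delta>"
        using lipschitz[OF w(1)] w(2) C by (simp add: field_simps)
      moreover have "f w \<in> S"
        using fQ w(1) by blast
      ultimately have "\<eta> \<bullet> (f w - f z) \<le> \<epsilon> / C * norm (f w - f z)"
        using \<delta> by blast
      then have "\<xi> \<bullet> (w - z) \<le> \<epsilon> / C * norm (f w - f z)"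
        using inner[OF w(1)] by simp
      also have "\<dots> \<le> \<epsilon> / C * (C * norm (w - z))"
        using lipschitz[OF w(1)] \<open>\<epsilon> > 0\<close> C by (intro mult_left_mono) auto
      finally show "\<xi> \<bullet> (w - z) \<le> \<epsilon> * norm (w - z)"
        using C by simp
    qed (use \<open>\<delta> > 0\<close> C in simp)
  qed
  then show ?thesis
    using z unfolding regular_normal_def by blast
qed

lemma regular_normal_of_local_decomposition:
  fixes \<eta> :: "'a::euclidean_space" and \<eta>\<^sub>1 :: "'b::euclidean_space" and \<eta>\<^sub>2 :: "'c::euclidean_space"
  assumes "s \<in> S" and \<eta>\<^sub>1: "\<eta>\<^sub>1 \<in> regular_normal Q\<^sub>1 q\<^sub>1" and \<eta>\<^sub>2: "\<eta>\<^sub>2 \<in> regular_normal Q\<^sub>2 q\<^sub>2"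
    and "r > 0" and "K > 0"
    and decomposition: "\<And>p. p \<in> S \<Longrightarrow> norm (p - s) < r \<Longrightarrow> \<exists>q\<in>Q\<^sub>1. \<exists>q'\<in>Q\<^sub>2.
          \<eta> \<bullet> (p - s) = \<eta>\<^sub>1 \<bullet> (q - q\<^sub>1) + \<eta>\<^sub>2 \<bullet> (q' - q\<^sub>2) \<and>
          norm (q - q\<^sub>1) \<le> K * norm (p - s) \<and> norm (q' - q\<^sub>2) \<le> K * norm (p - s)"
  shows "\<eta> \<in> regular_normal S s"
proof -
  have "\<exists>\<delta>>0. \<forall>p\<in>S. norm (p - s) < \<delta> \<longrightarrow> \<eta> \<bullet> (p - s) \<le> \<epsilon> * norm (p - s)"
    if "\<epsilon> > 0" for \<epsilon>
  proof -
    define \<epsilon>' where "\<epsilon>' = \<epsilon> / (2 * K)"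
    have "\<epsilon>' > 0"
      using \<open>\<epsilon> > 0\<close> \<open>K > 0\<close> by (simp add: \<epsilon>'_def)
    obtain \<delta>\<^sub>1 \<delta>\<^sub>2 where "\<delta>\<^sub>1 > 0" "\<delta>\<^sub>2 > 0"
      and \<delta>\<^sub>1: "\<And>q. q \<in> Q\<^sub>1 \<Longrightarrow> norm (q - q\<^sub>1) < \<delta>\<^sub>1 \<Longrightarrow> \<eta>\<^sub>1 \<bullet> (q - q\<^sub>1) \<le> \<epsilon>' * norm (q - q\<^sub>1)"
      and \<delta>\<^sub>2: "\<And>q'. q' \<in> Q\<^sub>2 \<Longrightarrow> norm (q' - q\<^sub>2) < \<delta>\<^sub>2 \<Longrightarrow> \<eta>\<^sub>2 \<bullet> (q' - q\<^sub>2) \<le> \<epsilon>' * norm (q' - q\<^sub>2)"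
      using regular_normalD[OF \<eta>\<^sub>1 \<open>\<epsilon>' > 0\<close>] regular_normalD[OF \<eta>\<^sub>2 \<open>\<epsilon>' > 0\<close>] by metis
    show ?thesis
    proof (intro exI[of _ "min r (min \<delta>\<^sub>1 \<delta>\<^sub>2 / K)"] conjI ballI impI)
      fix p assume "p \<in> S" and close: "norm (p - s) < min r (min \<delta>\<^sub>1 \<delta>\<^sub>2 / K)"
      then obtain q q' where "q \<in> Q\<^sub>1" "q' \<in> Q\<^sub>2"
        and inner: "\<eta> \<bullet> (p - s) = \<eta>\<^sub>1 \<bullet> (q - q\<^sub>1) + \<eta>\<^sub>2 \<bullet> (q' - q\<^sub>2)"
        and q: "norm (q - q\<^sub>1) \<le> K * norm (p - s)" and q': "norm (q' - q\<^sub>2) \<le> K * norm (p - s)"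
        using decomposition by force
      have "K * norm (p - s) < min \<delta>\<^sub>1 \<delta>\<^sub>2"
        using close \<open>K > 0\<close> by (simp add: field_simps)
      then have "\<eta> \<bullet> (p - s) \<le> \<epsilon>' * norm (q - q\<^sub>1) + \<epsilon>' * norm (q' - q\<^sub>2)"
        using \<delta>\<^sub>1[OF \<open>q \<in> Q\<^sub>1\<close>] \<delta>\<^sub>2[OF \<open>q' \<in> Q\<^sub>2\<close>] q q' inner by simp
      also have "\<dots> \<le> \<epsilon>' * (K * norm (p - s)) + \<epsilon>' * (K * norm (p - s))"
        using q q' \<open>\<epsilon>' > 0\<close> by (intro add_mono mult_left_mono) auto
      also have "\<dots> = \<epsilon> * norm (p - s)"
        using \<open>K > 0\<close> by (simp add: \<epsilon>'_def field_simps)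
      finally show "\<eta> \<bullet> (p - s) \<le> \<epsilon> * norm (p - s)" .
    qed (use \<open>r > 0\<close> \<open>\<delta>\<^sub>1 > 0\<close> \<open>\<delta>\<^sub>2 > 0\<close> \<open>K > 0\<close> in simp)
  qed
  then show ?thesis
    using \<open>s \<in> S\<close> unfolding regular_normal_def by blast
qed

lemma dir_normal_seqI:
  assumes "\<And>k. t k > 0" and "t \<longlonglongrightarrow> 0" and "(\<lambda>k. (zk k - z) /\<^sub>R t k) \<longlonglongrightarrow> w"
    and "\<eta>k \<longlonglongrightarrow> \<eta>" and "\<And>k. \<eta>k k \<in> regular_normal Q (zk k)"
  shows "\<eta> \<in> dir_normal Q z w"
  unfolding dir_normal_def
proof (intro CollectI exI conjI allI)
  fix k
  have "z + t k *\<^sub>R ((zk k - z) /\<^sub>R t k) = zk k"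
    using assms(1)[of k] by simp
  then show "\<eta>k k \<in> regular_normal Q (z + t k *\<^sub>R ((zk k - z) /\<^sub>R t k))"
    using assms(5) by simp
qed (use assms in auto)

lemma tendsto_of_difference_quotient:
  fixes f :: "nat \<Rightarrow> 'a::real_normed_vector"
  assumes "t \<longlonglongrightarrow> 0" and "(\<lambda>k. (f k - a) /\<^sub>R t k) \<longlonglongrightarrow> v" and "\<And>k. t k \<noteq> 0"
  shows "f \<longlonglongrightarrow> a"
proof -
  have "(\<lambda>k. t k *\<^sub>R ((f k - a) /\<^sub>R t k)) \<longlonglongrightarrow> 0 *\<^sub>R v"
    by (intro tendsto_scaleR assms)
  then show ?thesis
    using assms(3) by (simp add: LIM_zero_iff)
qed

lemma calm_iff:
  "calm g x \<longleftrightarrow> (\<exists>\<epsilon>>0. \<exists>L>0. \<forall>w. norm w \<le> \<epsilon> \<longrightarrow> norm (g (x + w) - g x) \<le> L * norm w)"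
  unfolding calm_def calm_dir_def dir_nbhd_def by auto

lemma dir_nbhd_unit_iff:
  assumes "norm u = 1" and "w \<noteq> 0"
  shows "w \<in> dir_nbhd \<epsilon> \<delta> u \<longleftrightarrow> dist (w /\<^sub>R norm w) u \<le> \<delta> \<and> norm w \<le> \<epsilon>"
proof -
  have "norm w *\<^sub>R u - norm u *\<^sub>R w = norm w *\<^sub>R (u - w /\<^sub>R norm w)"
    using assms by (simp add: algebra_simps)
  then have "norm (norm w *\<^sub>R u - norm u *\<^sub>R w) = norm w * dist (w /\<^sub>R norm w) u"
    by (simp add: dist_norm norm_minus_commute)
  then show ?thesis
    using assms by (simp add: dir_nbhd_def mult.commute)
qed

lemma calm_dir_imp_Bseq_difference_quotients:
  assumes "calm_dir g xb u" and "norm u = 1" and "xk \<longlonglongrightarrow> xb" and "\<And>k. xk k \<noteq> xb"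
    and "(\<lambda>k. (xk k - xb) /\<^sub>R norm (xk k - xb)) \<longlonglongrightarrow> u"
  shows "Bseq (\<lambda>k. (g (xk k) - g xb) /\<^sub>R norm (xk k - xb))"
proof -
  obtain \<epsilon> \<delta> L where "\<epsilon> > 0" "\<delta> > 0"
    and L: "\<And>w. w \<in> dir_nbhd \<epsilon> \<delta> u \<Longrightarrow> norm (g (xb + w) - g xb) \<le> L * norm w"
    using assms(1) unfolding calm_dir_def by blast
  have "eventually (\<lambda>k. norm (xk k - xb) < \<epsilon>) sequentially"
    using assms(3) \<open>\<epsilon> > 0\<close> by (simp add: tendsto_iff dist_norm)
  moreover have "eventually (\<lambda>k. dist ((xk k - xb) /\<^sub>R norm (xk k - xb)) u < \<delta>) sequentially"
    using assms(5) \<open>\<delta> > 0\<close> by (simp add: tendsto_iff)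
  ultimately have "eventually (\<lambda>k. norm ((g (xk k) - g xb) /\<^sub>R norm (xk k - xb)) \<le> L) sequentially"
  proof eventually_elim
    case (elim k)
    then have "xk k - xb \<in> dir_nbhd \<epsilon> \<delta> u"
      using assms(2,4) by (simp add: dir_nbhd_unit_iff)
    then have "norm (g (xk k) - g xb) \<le> L * norm (xk k - xb)"
      using L by fastforce
    then show ?case
      using assms(4)[of k] by (simp add: divide_simps mult.commute)
  qed
  then show ?thesis
    by (rule BfunI)
qed

lemma norm_increment_components_le:
  fixes a :: "'a::real_normed_vector" and b c :: "'b::real_normed_vector"
  assumes n: "norm (a, b - c) \<le> n" and b: "norm b \<le> L * norm a" and "L \<ge> 0"
  shows "norm (a, b) \<le> (L + 1) * n" and "norm c \<le> (L + 1) * n"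
proof -
  have a: "norm a \<le> n" and bc: "norm (b - c) \<le> n"
    using n norm_fst_le[of a "b - c"] norm_snd_le[of "b - c" a] by linarith+
  have "norm b \<le> L * n"
    using b mult_left_mono[OF a \<open>L \<ge> 0\<close>] by linarith
  moreover have "norm (a, b) \<le> norm a + norm b" and "norm c \<le> norm b + norm (b - c)"
    using norm_Pair_le norm_triangle_ineq4[of b "b - c"] by auto
  ultimately show "norm (a, b) \<le> (L + 1) * n" and "norm c \<le> (L + 1) * n"
    using a bc by (simp_all add: algebra_simps)
qed

definition constraint_map :: "('a \<Rightarrow> 'b::ab_group_add) \<Rightarrow> 'b set \<Rightarrow> 'a \<Rightarrow> 'b set" where
  "constraint_map g D x = {g x - d | d. d \<in> D}"

lemma regular_normal_constraint_graphD:
  fixes g :: "'a::euclidean_space \<Rightarrow> 'b::euclidean_space"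
  assumes N: "(\<eta>, - lam) \<in> regular_normal (graph_mult (constraint_map g D)) (x, y)"
  shows "(\<eta>, - lam) \<in> regular_normal (graph_fun g) (x, g x)"
    and "lam \<in> regular_normal D (g x - y)"
proof -
  have "g x - y \<in> D"
    using N by (auto simp: regular_normal_def graph_mult_def constraint_map_def)
  then have graph_shift: "(\<lambda>p. p - (0, g x - y)) ` graph_fun g \<subseteq> graph_mult (constraint_map g D)"
    and set_embed: "(\<lambda>d. (x, g x - d)) ` D \<subseteq> graph_mult (constraint_map g D)"
    by (force simp: graph_fun_def graph_mult_def constraint_map_def)+
  show "(\<eta>, - lam) \<in> regular_normal (graph_fun g) (x, g x)"
    by (rule regular_normal_pullback[OF _ _ graph_shift, of _ _ 1]) (use N in \<open>auto simp: graph_fun_def\<close>)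
  show "lam \<in> regular_normal D (g x - y)"
    by (rule regular_normal_pullback[OF _ \<open>g x - y \<in> D\<close> set_embed, of _ 1])
      (use N in \<open>auto simp: norm_Pair algebra_simps norm_minus_commute\<close>)
qed

lemma regular_normal_constraint_graphI:
  fixes g :: "'a::euclidean_space \<Rightarrow> 'b::euclidean_space"
  assumes G: "(\<eta>, - lam) \<in> regular_normal (graph_fun g) (x, g x)"
    and N: "lam \<in> regular_normal D z" and "calm g x"
  shows "(\<eta>, - lam) \<in> regular_normal (graph_mult (constraint_map g D)) (x, g x - z)"
proof -
  obtain \<epsilon> L where "\<epsilon> > 0" "L > 0"
    and L: "\<And>w. norm w \<le> \<epsilon> \<Longrightarrow> norm (g (x + w) - g x) \<le> L * norm w"
    using \<open>calm g x\<close> unfolding calm_iff by blast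
  have "z \<in> D"
    using N by (simp add: regular_normal_def)
  show ?thesis
  proof (rule regular_normal_of_local_decomposition[OF _ G N \<open>\<epsilon> > 0\<close>, where K = "L + 1"])
    fix p assume "p \<in> graph_mult (constraint_map g D)" and close: "norm (p - (x, g x - z)) < \<epsilon>"
    then obtain x' d where p: "p = (x', g x' - d)" and "d \<in> D"
      unfolding graph_mult_def constraint_map_def by auto
    have diff: "p - (x, g x - z) = (x' - x, (g x' - g x) - (d - z))"
      by (simp add: p)
    have "norm (x' - x) \<le> \<epsilon>"
      using close norm_fst_le[of "x' - x" "g x' - g x - (d - z)"] unfolding diff by linarith
    then have "norm (g x' - g x) \<le> L * norm (x' - x)"
      using L[of "x' - x"] by simp
    then have "norm ((x', g x') - (x, g x)) \<le> (L + 1) * norm (p - (x, g x - z))"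
      and "norm (d - z) \<le> (L + 1) * norm (p - (x, g x - z))"
      using norm_increment_components_le[of "x' - x" "g x' - g x" "d - z" _ L] \<open>L > 0\<close>
      unfolding diff by auto
    moreover have "(\<eta>, - lam) \<bullet> (p - (x, g x - z)) = (\<eta>, - lam) \<bullet> ((x', g x') - (x, g x)) + lam \<bullet> (d - z)"
      by (simp add: diff algebra_simps)
    ultimately show "\<exists>q\<in>graph_fun g. \<exists>d\<in>D.
        (\<eta>, - lam) \<bullet> (p - (x, g x - z)) = (\<eta>, - lam) \<bullet> (q - (x, g x)) + lam \<bullet> (d - z) \<and>
        norm (q - (x, g x)) \<le> (L + 1) * norm (p - (x, g x - z)) \<and>
        norm (d - z) \<le> (L + 1) * norm (p - (x, g x - z))"
      using \<open>d \<in> D\<close> unfolding graph_fun_def by blast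
  qed (use \<open>z \<in> D\<close> \<open>L > 0\<close> in \<open>auto simp: graph_mult_def constraint_map_def\<close>)
qed

definition quasi_normal_violation ::
    "('a::euclidean_space \<Rightarrow> 'b::euclidean_space set) \<Rightarrow> 'a \<Rightarrow> 'a \<Rightarrow> 'b set \<Rightarrow> 'b \<Rightarrow>
     (nat \<Rightarrow> 'a) \<Rightarrow> (nat \<Rightarrow> 'b) \<Rightarrow> (nat \<Rightarrow> 'b) \<Rightarrow> (nat \<Rightarrow> 'a) \<Rightarrow> bool" where
  "quasi_normal_violation \<Phi> xb u E lam xk yk lamk \<eta>k \<longleftrightarrow>
     (\<forall>k. (xk k, yk k) \<in> graph_mult \<Phi> \<and> xk k \<noteq> xb) \<and>
     xk \<longlonglongrightarrow> xb \<and> yk \<longlonglongrightarrow> 0 \<and> lamk \<longlonglongrightarrow> lam \<and> \<eta>k \<longlonglongrightarrow> 0 \<and>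
     (\<lambda>k. (xk k - xb) /\<^sub>R norm (xk k - xb)) \<longlonglongrightarrow> u \<and>
     (\<lambda>k. yk k /\<^sub>R norm (xk k - xb)) \<longlonglongrightarrow> 0 \<and>
     (\<forall>k. \<eta>k k \<in> reg_coderiv_mult \<Phi> (xk k) (yk k) (lamk k) \<and>
        (\<forall>e\<in>E. lam \<bullet> e \<noteq> 0 \<longrightarrow> (lam \<bullet> e) * (yk k \<bullet> e) > 0))"

definition condition_N_violation ::
    "('a::euclidean_space \<Rightarrow> 'b::euclidean_space) \<Rightarrow> 'b set \<Rightarrow> 'a \<Rightarrow> 'a \<Rightarrow> 'b set \<Rightarrow> 'b \<Rightarrow> 'b \<Rightarrow>
     (nat \<Rightarrow> 'a) \<Rightarrow> (nat \<Rightarrow> 'b) \<Rightarrow> (nat \<Rightarrow> 'b) \<Rightarrow> (nat \<Rightarrow> 'a) \<Rightarrow> bool" where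
  "condition_N_violation g D xb u E v lam xk zk lamk \<eta>k \<longleftrightarrow>
     (\<forall>k. xk k \<noteq> xb \<and> zk k \<in> D) \<and>
     xk \<longlonglongrightarrow> xb \<and> zk \<longlonglongrightarrow> g xb \<and> lamk \<longlonglongrightarrow> lam \<and> \<eta>k \<longlonglongrightarrow> 0 \<and>
     (\<lambda>k. (xk k - xb) /\<^sub>R norm (xk k - xb)) \<longlonglongrightarrow> u \<and>
     (\<lambda>k. (zk k - g xb) /\<^sub>R norm (xk k - xb)) \<longlonglongrightarrow> v \<and>
     (\<lambda>k. (g (xk k) - g xb) /\<^sub>R norm (xk k - xb)) \<longlonglongrightarrow> v \<and>
     (\<forall>k. \<eta>k k \<in> reg_coderiv_fun g (xk k) (lamk k) \<and> lamk k \<in> regular_normal D (zk k) \<and>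
        (\<forall>e\<in>E. lam \<bullet> e \<noteq> 0 \<longrightarrow> (lam \<bullet> e) * ((g (xk k) - zk k) \<bullet> e) > 0))"

lemma quasi_normal_dir_iff:
  "quasi_normal_dir \<Phi> xb u E \<longleftrightarrow>
     \<not> (\<exists>lam. lam \<noteq> 0 \<and> 0 \<in> dir_coderiv_mult \<Phi> (xb, 0) (u, 0) lam \<and>
          (\<exists>xk yk lamk \<eta>k. quasi_normal_violation \<Phi> xb u E lam xk yk lamk \<eta>k))"
  unfolding quasi_normal_dir_def quasi_normal_violation_def ..

lemma condition_N_iff:
  "condition_N g D xb u E \<longleftrightarrow>
     \<not> (\<exists>v lam. lam \<noteq> 0 \<and> lam \<in> dir_normal D (g xb) v \<and> 0 \<in> dir_coderiv_fun g xb (u, v) lam \<and>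
          (\<exists>xk zk lamk \<eta>k. condition_N_violation g D xb u E v lam xk zk lamk \<eta>k))"
  unfolding condition_N_def condition_N_violation_def ..

lemma quasi_normal_violation_subseq:
  assumes "quasi_normal_violation \<Phi> xb u E lam xk yk lamk \<eta>k" and "strict_mono s"
  shows "quasi_normal_violation \<Phi> xb u E lam (xk \<circ> s) (yk \<circ> s) (lamk \<circ> s) (\<eta>k \<circ> s)"
  using assms unfolding quasi_normal_violation_def o_def by (auto intro: LIMSEQ_subseq_LIMSEQ[unfolded o_def])

lemma condition_N_violation_subseq:
  assumes "condition_N_violation g D xb u E v lam xk zk lamk \<eta>k" and "strict_mono s"
  shows "condition_N_violation g D xb u E v lam (xk \<circ> s) (zk \<circ> s) (lamk \<circ> s) (\<eta>k \<circ> s)"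
  using assms unfolding condition_N_violation_def o_def by (auto intro: LIMSEQ_subseq_LIMSEQ[unfolded o_def])

lemma condition_N_violation_of_quasi_normal_violation:
  fixes g :: "'a::euclidean_space \<Rightarrow> 'b::euclidean_space"
  assumes V: "quasi_normal_violation (constraint_map g D) xb u E lam xk yk lamk \<eta>k"
    and v: "(\<lambda>k. (g (xk k) - g xb) /\<^sub>R norm (xk k - xb)) \<longlonglongrightarrow> v"
  shows "condition_N_violation g D xb u E v lam xk (\<lambda>k. g (xk k) - yk k) lamk \<eta>k"
    and "lam \<in> dir_normal D (g xb) v"
    and "0 \<in> dir_coderiv_fun g xb (u, v) lam"
proof -
  define t where "t k = norm (xk k - xb)" for k
  define zk where "zk k = g (xk k) - yk k" for k
  have ne: "\<And>k. xk k \<noteq> xb" and xk: "xk \<longlonglongrightarrow> xb" and yk: "yk \<longlonglongrightarrow> 0"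
    and lamk: "lamk \<longlonglongrightarrow> lam" and \<eta>k: "\<eta>k \<longlonglongrightarrow> 0"
    and u: "(\<lambda>k. (xk k - xb) /\<^sub>R t k) \<longlonglongrightarrow> u" and y: "(\<lambda>k. yk k /\<^sub>R t k) \<longlonglongrightarrow> 0"
    and coderiv: "\<And>k. (\<eta>k k, - lamk k) \<in> regular_normal (graph_mult (constraint_map g D)) (xk k, yk k)"
    and sign: "\<And>k. \<forall>e\<in>E. lam \<bullet> e \<noteq> 0 \<longrightarrow> (lam \<bullet> e) * (yk k \<bullet> e) > 0"
    using V unfolding quasi_normal_violation_def reg_coderiv_mult_def t_def by auto
  have t: "\<And>k. t k > 0" "t \<longlonglongrightarrow> 0"
    using ne tendsto_norm_zero[OF LIM_zero[OF xk]] by (simp_all add: t_def[abs_def])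
  note normals = regular_normal_constraint_graphD[OF coderiv]
  have "(\<lambda>k. (zk k - g xb) /\<^sub>R t k) = (\<lambda>k. (g (xk k) - g xb) /\<^sub>R t k - yk k /\<^sub>R t k)"
    by (simp add: zk_def t_def algebra_simps)
  then have z: "(\<lambda>k. (zk k - g xb) /\<^sub>R t k) \<longlonglongrightarrow> v"
    using tendsto_diff[OF v[folded t_def] y] by simp
  have "zk \<longlonglongrightarrow> g xb"
    using tendsto_of_difference_quotient[OF t(2) z] t(1) by (metis less_irrefl)
  moreover have "\<And>k. zk k \<in> D"
    using normals(2) by (simp add: zk_def regular_normal_def)
  ultimately show "condition_N_violation g D xb u E v lam xk zk lamk \<eta>k"
    using ne xk lamk \<eta>k u z v normals sign
    unfolding condition_N_violation_def reg_coderiv_fun_def zk_def t_def by auto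
  show "lam \<in> dir_normal D (g xb) v"
    using dir_normal_seqI[OF t z lamk] normals(2) by (simp add: zk_def)
  have "(\<lambda>k. ((xk k, g (xk k)) - (xb, g xb)) /\<^sub>R t k) \<longlonglongrightarrow> (u, v)"
    using tendsto_Pair[OF u v[folded t_def]] by simp
  from dir_normal_seqI[OF t this tendsto_Pair[OF \<eta>k tendsto_minus[OF lamk]] normals(1)]
  show "0 \<in> dir_coderiv_fun g xb (u, v) lam"
    unfolding dir_coderiv_fun_def by simp
qed

lemma quasi_normal_violation_of_condition_N_violation:
  fixes g :: "'a::euclidean_space \<Rightarrow> 'b::euclidean_space"
  assumes V: "condition_N_violation g D xb u E v lam xk zk lamk \<eta>k"
    and calm: "\<And>k. calm g (xk k)"
  shows "quasi_normal_violation (constraint_map g D) xb u E lam xk (\<lambda>k. g (xk k) - zk k) lamk \<eta>k"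
    and "0 \<in> dir_coderiv_mult (constraint_map g D) (xb, 0) (u, 0) lam"
proof -
  define t where "t k = norm (xk k - xb)" for k
  define yk where "yk k = g (xk k) - zk k" for k
  have ne: "\<And>k. xk k \<noteq> xb" and zD: "\<And>k. zk k \<in> D" and xk: "xk \<longlonglongrightarrow> xb"
    and zk: "zk \<longlonglongrightarrow> g xb" and lamk: "lamk \<longlonglongrightarrow> lam" and \<eta>k: "\<eta>k \<longlonglongrightarrow> 0"
    and u: "(\<lambda>k. (xk k - xb) /\<^sub>R t k) \<longlonglongrightarrow> u"
    and z: "(\<lambda>k. (zk k - g xb) /\<^sub>R t k) \<longlonglongrightarrow> v"
    and v: "(\<lambda>k. (g (xk k) - g xb) /\<^sub>R t k) \<longlonglongrightarrow> v"
    and graph_normal: "\<And>k. (\<eta>k k, - lamk k) \<in> regular_normal (graph_fun g) (xk k, g (xk k))"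
    and set_normal: "\<And>k. lamk k \<in> regular_normal D (zk k)"
    and sign: "\<And>k. \<forall>e\<in>E. lam \<bullet> e \<noteq> 0 \<longrightarrow> (lam \<bullet> e) * ((g (xk k) - zk k) \<bullet> e) > 0"
    using V unfolding condition_N_violation_def reg_coderiv_fun_def t_def by auto
  have t: "\<And>k. t k > 0" "t \<longlonglongrightarrow> 0"
    using ne tendsto_norm_zero[OF LIM_zero[OF xk]] by (simp_all add: t_def[abs_def])
  have normals: "\<And>k. (\<eta>k k, - lamk k) \<in> regular_normal (graph_mult (constraint_map g D)) (xk k, yk k)"
    unfolding yk_def using regular_normal_constraint_graphI[OF graph_normal set_normal calm] .
  have "(\<lambda>k. g (xk k)) \<longlonglongrightarrow> g xb"
    using tendsto_of_difference_quotient[OF t(2) v] t(1) by (metis less_irrefl)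
  then have "yk \<longlonglongrightarrow> 0"
    using tendsto_diff[OF _ zk] unfolding yk_def[abs_def] by fastforce
  moreover have "(\<lambda>k. yk k /\<^sub>R t k) = (\<lambda>k. (g (xk k) - g xb) /\<^sub>R t k - (zk k - g xb) /\<^sub>R t k)"
    by (simp add: yk_def t_def algebra_simps)
  then have y: "(\<lambda>k. yk k /\<^sub>R t k) \<longlonglongrightarrow> 0"
    using tendsto_diff[OF v z] by simp
  moreover have "\<And>k. (xk k, yk k) \<in> graph_mult (constraint_map g D)"
    using zD by (auto simp: yk_def graph_mult_def constraint_map_def)
  ultimately show "quasi_normal_violation (constraint_map g D) xb u E lam xk yk lamk \<eta>k"
    using ne xk lamk \<eta>k u normals sign
    unfolding quasi_normal_violation_def reg_coderiv_mult_def yk_def t_def by auto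
  have "(\<lambda>k. ((xk k, yk k) - (xb, 0)) /\<^sub>R t k) \<longlonglongrightarrow> (u, 0)"
    using tendsto_Pair[OF u y] by simp
  from dir_normal_seqI[OF t this tendsto_Pair[OF \<eta>k tendsto_minus[OF lamk]] normals]
  show "0 \<in> dir_coderiv_mult (constraint_map g D) (xb, 0) (u, 0) lam"
    unfolding dir_coderiv_mult_def by simp
qed

lemma quasi_normal_dir_if_condition_N:
  fixes g :: "'a::euclidean_space \<Rightarrow> 'b::euclidean_space"
  assumes "norm u = 1" and "calm_dir g xb u" and N: "condition_N g D xb u E"
  shows "quasi_normal_dir (constraint_map g D) xb u E"
proof (rule ccontr)
  assume "\<not> quasi_normal_dir (constraint_map g D) xb u E"
  then obtain lam xk yk lamk \<eta>k where "lam \<noteq> 0"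
    and V: "quasi_normal_violation (constraint_map g D) xb u E lam xk yk lamk \<eta>k"
    unfolding quasi_normal_dir_iff by blast
  then have "Bseq (\<lambda>k. (g (xk k) - g xb) /\<^sub>R norm (xk k - xb))"
    using assms(1,2) by (intro calm_dir_imp_Bseq_difference_quotients)
      (auto simp: quasi_normal_violation_def)
  then obtain v s where "strict_mono s"
    and "(\<lambda>k. (g (xk (s k)) - g xb) /\<^sub>R norm (xk (s k) - xb)) \<longlonglongrightarrow> v"
    using bounded_imp_convergent_subsequence unfolding Bseq_eq_bounded o_def by blast
  from condition_N_violation_of_quasi_normal_violation[OF
      quasi_normal_violation_subseq[OF V \<open>strict_mono s\<close>]] this
  show False
    using N \<open>lam \<noteq> 0\<close> unfolding condition_N_iff o_def by blast
qed

lemma condition_N_if_quasi_normal_dir: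
  fixes g :: "'a::euclidean_space \<Rightarrow> 'b::euclidean_space"
  assumes "\<exists>r>0. \<forall>x\<in>ball xb r. calm g x" and Q: "quasi_normal_dir (constraint_map g D) xb u E"
  shows "condition_N g D xb u E"
proof (rule ccontr)
  assume "\<not> condition_N g D xb u E"
  then obtain v lam xk zk lamk \<eta>k where "lam \<noteq> 0"
    and V: "condition_N_violation g D xb u E v lam xk zk lamk \<eta>k"
    unfolding condition_N_iff by blast
  obtain r where "r > 0" and calm: "\<And>x. x \<in> ball xb r \<Longrightarrow> calm g x"
    using assms(1) by blast
  have "xk \<longlonglongrightarrow> xb"
    using V by (simp add: condition_N_violation_def)
  then obtain n where "\<And>k. k \<ge> n \<Longrightarrow> xk k \<in> ball xb r"
    using \<open>r > 0\<close> unfolding LIMSEQ_def by (auto simp: dist_commute)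
  then have "calm g ((xk \<circ> (\<lambda>k. k + n)) k)" for k
    by (simp add: calm)
  from quasi_normal_violation_of_condition_N_violation[OF
      condition_N_violation_subseq[OF V strict_mono_add] this]
  show False
    using Q \<open>lam \<noteq> 0\<close> unfolding quasi_normal_dir_iff by blast
qed

theorem proposition5p13:
  fixes g :: "'a::euclidean_space \<Rightarrow> 'b::euclidean_space"
    and D :: "'b set" and xb u :: 'a and E :: "'b set"
  assumes "continuous_on UNIV g"
    and "closed D"
    and "g xb \<in> D"
    and "norm u = 1"
    and "calm_dir g xb u"
    and "orthonormal_basis E"
  defines "\<Phi> \<equiv> (\<lambda>x. {g x - d | d. d \<in> D})"
  shows "(condition_N g D xb u E \<longrightarrow> quasi_normal_dir \<Phi> xb u E) \<and>
         ((\<exists>r>0. \<forall>x\<in>ball xb r. calm g x) \<longrightarrow>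
            (condition_N g D xb u E \<longleftrightarrow> quasi_normal_dir \<Phi> xb u E))"
proof -
  have "\<Phi> = constraint_map g D"
    by (simp add: \<Phi>_def constraint_map_def fun_eq_iff)
  then show ?thesis
    using quasi_normal_dir_if_condition_N[OF assms(4,5)] condition_N_if_quasi_normal_dir by blast
qed

end
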